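(* Let $F$ be a Ferrers diagram and let $(x,y)\in\mathbb{N}^2$ with $x>1$, $y>1$ and $(x,y)\notin F$. Then the divisor $D_{x,y}$ on $R(F)$ has positive rank.
   Context: $\mathbb{N}=\{1,2,3,\dots\}$. A Ferrers diagram is a finite subset $F\subset\mathbb{N}^2$ such that whenever $(x,y)\in F$, either $x=1$ or $(x-1,y)\in F$, and either $y=1$ or $(x,y-1)\in F$; $x$ is the column index and $y$ the row index. The Ferrers rook graph $R(F)$ is the simple graph with vertex set $F$ in which distinct $(x,y),(x',y')$ are adjacent iff $x=x'$ or $y=y'$. For $(x,y)\in\mathbb{N}^2$, $D_{x,y}=\sum_{(x',y')\in F,\ x'\neq x,\ y'\neq y}(x',y')$, i.e. one chip on each vertex of $F$ not in column $x$ and not in row $y$. Divisors on a graph: functions $D:V\to\mathbb{Z}$; firing a vertex $v$ means $v$ loses $\deg(v)$ chips and each neighbor gains one; divisors are equivalent if related by a sequence of firings; $\vert D\vert$ is the set of effective (nonnegative) divisors equivalent to $D$; $D$ has positive rank if for every vertex $v$ some $D'\in\vert D\vert$ has $D'(v)>0$. *)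

theory Defs
  imports Main
begin

text \<open>Points of N^2 with N = {1,2,3,...}; the first coordinate is the column x,
  the second the row y.\<close>

definition ferrers :: "(nat \<times> nat) set \<Rightarrow> bool" where
  "ferrers F \<longleftrightarrow> finite F \<and>
     (\<forall>(x, y) \<in> F. x \<ge> 1 \<and> y \<ge> 1 \<and>
        (x = 1 \<or> (x - 1, y) \<in> F) \<and> (y = 1 \<or> (x, y - 1) \<in> F))"

definition rook_adj :: "nat \<times> nat \<Rightarrow> nat \<times> nat \<Rightarrow> bool" where
  "rook_adj v w \<longleftrightarrow> v \<noteq> w \<and> (fst v = fst w \<or> snd v = snd w)"

definition rook_deg :: "(nat \<times> nat) set \<Rightarrow> nat \<times> nat \<Rightarrow> nat" where
  "rook_deg F v = card {w \<in> F. rook_adj v w}"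

text \<open>Divisors are functions to int; only their values on F matter.
  Firing f(v) times each vertex v (f integer-valued) changes D to
  D(v) - deg(v) f(v) + sum of f over neighbours of v.\<close>
definition fire_by :: "(nat \<times> nat) set \<Rightarrow> (nat \<times> nat \<Rightarrow> int) \<Rightarrow> (nat \<times> nat \<Rightarrow> int) \<Rightarrow> nat \<times> nat \<Rightarrow> int" where
  "fire_by F f D v = D v - int (rook_deg F v) * f v + (\<Sum>w \<in> {w \<in> F. rook_adj v w}. f w)"

definition div_equiv :: "(nat \<times> nat) set \<Rightarrow> (nat \<times> nat \<Rightarrow> int) \<Rightarrow> (nat \<times> nat \<Rightarrow> int) \<Rightarrow> bool" where
  "div_equiv F D D' \<longleftrightarrow> (\<exists>f. \<forall>v \<in> F. D' v = fire_by F f D v)"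

definition effective :: "(nat \<times> nat) set \<Rightarrow> (nat \<times> nat \<Rightarrow> int) \<Rightarrow> bool" where
  "effective F D \<longleftrightarrow> (\<forall>v \<in> F. D v \<ge> 0)"

definition positive_rank :: "(nat \<times> nat) set \<Rightarrow> (nat \<times> nat \<Rightarrow> int) \<Rightarrow> bool" where
  "positive_rank F D \<longleftrightarrow>
     (\<forall>v \<in> F. \<exists>D'. div_equiv F D D' \<and> effective F D' \<and> D' v > 0)"

definition D_xy :: "(nat \<times> nat) set \<Rightarrow> nat \<Rightarrow> nat \<Rightarrow> nat \<times> nat \<Rightarrow> int" where
  "D_xy F x y v = (if v \<in> F \<and> fst v \<noteq> x \<and> snd v \<noteq> y then 1 else 0)"

end

theory Submission
  imports Defs
begin

text \<open>Every vertex outside row y and column x already carries a chip. A vertex in column x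
  gets one by un-firing the whole column: it gains a chip from each row neighbour, and its left
  neighbour exists because x > 1. A vertex outside the column loses at most one chip, to the
  vertex of column x in its own row, and in row y there is no such vertex since
  (x, y) \<notin> F; so the result stays effective. Rows are handled symmetrically by
  transposing the diagram.\<close>

lemma fire_by_neg_indicator:
  assumes "finite F"
  shows "fire_by F (\<lambda>w. if P w then -1 else 0) D v =
    D v + (if P v then int (card {w \<in> F. rook_adj v w \<and> \<not> P w})
           else - int (card {w \<in> F. rook_adj v w \<and> P w}))"
proof -
  define N where "N = {w \<in> F. rook_adj v w}"
  have fin: "finite N" using assms unfolding N_def by simp
  have "card N = card ({w \<in> N. P w} \<union> {w \<in> N. \<not> P w})"
    by (rule arg_cong[where f = card]) auto
  also have "\<dots> = card {w \<in> N. P w} + card {w \<in> N. \<not> P w}"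
    by (rule card_Un_disjoint) (use fin in auto)
  finally have card_N: "card N = card {w \<in> N. P w} + card {w \<in> N. \<not> P w}" .
  have "(\<Sum>w \<in> N. if P w then -1 else 0 :: int) = - int (card {w \<in> N. P w})"
    using fin by (simp add: sum.inter_filter[symmetric])
  then show ?thesis
    using card_N unfolding fire_by_def rook_deg_def N_def[symmetric] by (simp add: N_def)
qed

lemma unfire_column_D_xy:
  assumes F: "ferrers F" and "x > 1" and "(x, y) \<notin> F" and "v \<in> F"
  defines "D' \<equiv> fire_by F (\<lambda>w. if fst w = x then -1 else 0) (D_xy F x y)"
  shows "0 \<le> D' v" and "fst v = x \<Longrightarrow> 0 < D' v"
proof -
  have fin: "finite F" using F by (simp add: ferrers_def)
  obtain a b where v: "v = (a, b)" by force
  have D': "D' v = D_xy F x y v +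
      (if a = x then int (card {w \<in> F. rook_adj v w \<and> fst w \<noteq> x})
       else - int (card {w \<in> F. rook_adj v w \<and> fst w = x}))"
    unfolding D'_def fire_by_neg_indicator[OF fin] using v by simp
  have pos_in_column: "0 < D' v" if "a = x"
  proof -
    have "(x - 1, b) \<in> F" using F \<open>v \<in> F\<close> \<open>x > 1\<close> v that unfolding ferrers_def by fastforce
    then have "(x - 1, b) \<in> {w \<in> F. rook_adj v w \<and> fst w \<noteq> x}"
      using v that \<open>x > 1\<close> unfolding rook_adj_def by auto
    then have "card {w \<in> F. rook_adj v w \<and> fst w \<noteq> x} > 0"
      by (intro card_gt_0_iff[THEN iffD2]) (use fin in auto)
    then show ?thesis using D' that by (simp add: D_xy_def)
  qed
  have nonneg_off_column: "0 \<le> D' v" if "a \<noteq> x"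
  proof -
    have column_nbrs: "{w \<in> F. rook_adj v w \<and> fst w = x} \<subseteq> {(x, b)} \<inter> F"
      using v that unfolding rook_adj_def by auto
    then have "card {w \<in> F. rook_adj v w \<and> fst w = x} \<le> card ({(x, b)} \<inter> F)"
      by (intro card_mono) auto
    also have "\<dots> \<le> 1" by (simp add: card_le_Suc0_iff_eq)
    finally have card_le: "card {w \<in> F. rook_adj v w \<and> fst w = x} \<le> 1" .
    have D'_eq: "D' v = D_xy F x y v - int (card {w \<in> F. rook_adj v w \<and> fst w = x})"
      using D' that by simp
    show ?thesis
    proof (cases "b = y")
      case True
      then have empty: "{w \<in> F. rook_adj v w \<and> fst w = x} = {}"
        using column_nbrs \<open>(x, y) \<notin> F\<close> by auto
      show ?thesis using D'_eq[unfolded empty] by (simp add: D_xy_def)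
    next
      case False
      then have "D_xy F x y v = 1" using v \<open>v \<in> F\<close> \<open>a \<noteq> x\<close> by (simp add: D_xy_def)
      then show ?thesis using D'_eq card_le by linarith
    qed
  qed
  show "0 \<le> D' v" using pos_in_column[THEN less_imp_le] nonneg_off_column by blast
  show "fst v = x \<Longrightarrow> 0 < D' v" using pos_in_column v by (metis fst_conv)
qed

lemma ferrers_swap:
  assumes "ferrers F"
  shows "ferrers (prod.swap ` F)"
  unfolding ferrers_def
proof (intro conjI ballI)
  show "finite (prod.swap ` F)" using assms by (simp add: ferrers_def)
next
  fix p assume "p \<in> prod.swap ` F"
  then obtain a b where p: "p = (a, b)" and "(b, a) \<in> F" by auto
  then have "1 \<le> b \<and> 1 \<le> a \<and> (b = 1 \<or> (b - 1, a) \<in> F) \<and> (a = 1 \<or> (b, a - 1) \<in> F)"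
    using assms unfolding ferrers_def by auto
  then show "case p of (x, y) \<Rightarrow> x \<ge> 1 \<and> y \<ge> 1 \<and>
      (x = 1 \<or> (x - 1, y) \<in> prod.swap ` F) \<and> (y = 1 \<or> (x, y - 1) \<in> prod.swap ` F)"
    using p by simp
qed

lemma fire_by_swap:
  "fire_by (prod.swap ` F) f D (prod.swap v) = fire_by F (f \<circ> prod.swap) (D \<circ> prod.swap) v"
proof -
  have nbrs: "{w \<in> prod.swap ` F. rook_adj (prod.swap v) w} = prod.swap ` {w \<in> F. rook_adj v w}"
    by (rule set_eqI, cases v) (auto simp: rook_adj_def)
  show ?thesis
    unfolding fire_by_def rook_deg_def nbrs card_image[OF inj_swap] sum.reindex[OF inj_swap]
    by simp
qed

lemma D_xy_swap: "D_xy (prod.swap ` F) y x (prod.swap v) = D_xy F x y v"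
  unfolding D_xy_def by (cases v) auto

lemma unfire_row_D_xy:
  assumes "ferrers F" and "y > 1" and "(x, y) \<notin> F" and "v \<in> F"
  defines "D' \<equiv> fire_by F (\<lambda>w. if snd w = y then -1 else 0) (D_xy F x y)"
  shows "0 \<le> D' v" and "snd v = y \<Longrightarrow> 0 < D' v"
proof -
  have "(y, x) \<notin> prod.swap ` F" and "prod.swap v \<in> prod.swap ` F"
    using assms(3,4) by auto
  note column = unfire_column_D_xy[OF ferrers_swap[OF assms(1)] assms(2) this]
  have D'_eq: "D' v = fire_by (prod.swap ` F) (\<lambda>w. if fst w = y then -1 else 0)
                 (D_xy (prod.swap ` F) y x) (prod.swap v)"
    unfolding D'_def fire_by_swap by (simp add: comp_def D_xy_swap)
  show "0 \<le> D' v" unfolding D'_eq by (rule column(1))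
  show "snd v = y \<Longrightarrow> 0 < D' v" unfolding D'_eq using column(2) by simp
qed

lemma fire_by_zero: "fire_by F (\<lambda>_. 0) D = D"
  by (simp add: fire_by_def fun_eq_iff)

lemma div_equiv_fire_by: "div_equiv F D (fire_by F f D)"
  unfolding div_equiv_def by blast

theorem proposition3p1:
  fixes F :: "(nat \<times> nat) set" and x y :: nat
  assumes "ferrers F" and "x > 1" and "y > 1" and "(x, y) \<notin> F"
  shows "positive_rank F (D_xy F x y)"
  unfolding positive_rank_def
proof
  fix v assume "v \<in> F"
  have "\<exists>f. effective F (fire_by F f (D_xy F x y)) \<and> 0 < fire_by F f (D_xy F x y) v"
  proof (cases "fst v = x \<or> snd v = y")
    case True
    then show ?thesis
    proof
      assume "fst v = x"
      then show ?thesis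
        using unfire_column_D_xy[OF assms(1,2,4)] \<open>v \<in> F\<close> unfolding effective_def by blast
    next
      assume "snd v = y"
      then show ?thesis
        using unfire_row_D_xy[OF assms(1,3,4)] \<open>v \<in> F\<close> unfolding effective_def by blast
    qed
  next
    case False
    then have "effective F (D_xy F x y) \<and> 0 < D_xy F x y v"
      using \<open>v \<in> F\<close> by (simp add: effective_def D_xy_def)
    then show ?thesis using fire_by_zero by metis
  qed
  then show "\<exists>D'. div_equiv F (D_xy F x y) D' \<and> effective F D' \<and> 0 < D' v"
    using div_equiv_fire_by by blast
qed

end
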